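(* Let $\mathbb A=(A_n)_{n\in\mathbb Z^+}$ be a sequence of invertible linear operators on $\mathbb R^d$ and $\mathcal S=\{\|\cdot\|_n;\ n\in\mathbb Z^+\}$ a sequence of norms such that there exist $K,a>0$ with $\|\mathcal A(m,n)x\|_m\le Ke^{a(m-n)}\|x\|_n$ and $\|\mathcal A(n,m)x\|_n\le Ke^{a(m-n)}\|x\|_m$ for all $m\ge n$, $x$. Let $\Sigma=\Sigma_{ED,\mathbb A,\mathcal S}$ and let $r_1<r_2$ be in $(0,\infty)\setminus\Sigma$. Then the following are equivalent: (a) $S_{r_1}(n)=S_{r_2}(n)$ for some $n\in\mathbb Z^+$ (equivalently, for all $n\in\mathbb Z^+$); (b) $[r_1,r_2]\cap\Sigma=\emptyset$.
   Context: $\mathbb Z^+=\{0,1,\dots\}$. $\mathcal A(m,n)=A_{m-1}\cdots A_n$ ($m>n$), $\mathrm{Id}$ ($m=n$), $A_m^{-1}\cdots A_{n-1}^{-1}$ ($m<n$). For $r>0$, $n\in\mathbb Z^+$: $S_r(n)=\{v\in\mathbb R^d:\ \sup_{m\ge n}r^{-(m-n)}\|\mathcal A(m,n)v\|_m<+\infty\}$. A sequence $(C_n)_{n\in\mathbb Z^+}$ with cocycle $\mathcal C$ admits a strong exponential dichotomy w.r.t. $\mathcal S$ if there exist $K>0$, $a\ge\lambda>0$ and projections $P_n$ with $C_nP_n=P_{n+1}C_n$ such that for $m\ge n$, $x$, $Q_m=\mathrm{Id}-P_m$: $\|\mathcal C(m,n)P_nx\|_m\le Ke^{-\lambda(m-n)}\|x\|_n$,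 $\|\mathcal C(n,m)Q_mx\|_n\le Ke^{-\lambda(m-n)}\|x\|_m$, $\|\mathcal C(m,n)x\|_m\le Ke^{a(m-n)}\|x\|_n$, $\|\mathcal C(n,m)x\|_n\le Ke^{a(m-n)}\|x\|_m$. $\Sigma_{ED,\mathbb A,\mathcal S}$: set of $\tau>0$ such that $(\tau^{-1}A_n)_{n\in\mathbb Z^+}$ does not admit a strong exponential dichotomy w.r.t. $\mathcal S$. *)

theory Defs
  imports "HOL-Analysis.Analysis"
begin

definition is_norm :: "(real^'d \<Rightarrow> real) \<Rightarrow> bool" where
  "is_norm N \<longleftrightarrow> (\<forall>x. N x \<ge> 0) \<and> (\<forall>x. N x = 0 \<longleftrightarrow> x = 0)
     \<and> (\<forall>c x. N (c *\<^sub>R x) = \<bar>c\<bar> * N x) \<and> (\<forall>x y. N (x + y) \<le> N x + N y)"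

text \<open>Cocycle: A(m,n) = A_{m-1}...A_n (m>n), Id (m=n), A_m^{-1}...A_{n-1}^{-1} (m<n).\<close>
fun prod_fwd :: "(nat \<Rightarrow> real^'d^'d) \<Rightarrow> nat \<Rightarrow> nat \<Rightarrow> real^'d^'d" where
  "prod_fwd A n 0 = mat 1"
| "prod_fwd A n (Suc k) = A (n + k) ** prod_fwd A n k"

fun prod_bwd :: "(nat \<Rightarrow> real^'d^'d) \<Rightarrow> nat \<Rightarrow> nat \<Rightarrow> real^'d^'d" where
  "prod_bwd A m 0 = mat 1"
| "prod_bwd A m (Suc k) = prod_bwd A m k ** matrix_inv (A (m + k))"

definition cocycle :: "(nat \<Rightarrow> real^'d^'d) \<Rightarrow> nat \<Rightarrow> nat \<Rightarrow> real^'d^'d" where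
  "cocycle A m n = (if n \<le> m then prod_fwd A n (m - n) else prod_bwd A m (n - m))"

definition S_set :: "(nat \<Rightarrow> real^'d^'d) \<Rightarrow> (nat \<Rightarrow> real^'d \<Rightarrow> real) \<Rightarrow> real \<Rightarrow> nat \<Rightarrow> (real^'d) set" where
  "S_set A N r n = {v. \<exists>B. \<forall>m\<ge>n. r powi (- int (m - n)) * N m (cocycle A m n *v v) \<le> B}"

definition strong_exp_dichotomy :: "(nat \<Rightarrow> real^'d^'d) \<Rightarrow> (nat \<Rightarrow> real^'d \<Rightarrow> real) \<Rightarrow> bool" where
  "strong_exp_dichotomy C N \<longleftrightarrow>
    (\<exists>K a lam (P :: nat \<Rightarrow> real^'d^'d). K > 0 \<and> lam > 0 \<and> a \<ge> lam \<and>
      (\<forall>n. P n ** P n = P n) \<and> (\<forall>n. C n ** P n = P (Suc n) ** C n) \<and>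
      (\<forall>m n x. n \<le> m \<longrightarrow>
         N m (cocycle C m n *v (P n *v x)) \<le> K * exp (- lam * real (m - n)) * N n x \<and>
         N n (cocycle C n m *v ((mat 1 - P m) *v x)) \<le> K * exp (- lam * real (m - n)) * N m x \<and>
         N m (cocycle C m n *v x) \<le> K * exp (a * real (m - n)) * N n x \<and>
         N n (cocycle C n m *v x) \<le> K * exp (a * real (m - n)) * N m x))"

definition Sigma_ED :: "(nat \<Rightarrow> real^'d^'d) \<Rightarrow> (nat \<Rightarrow> real^'d \<Rightarrow> real) \<Rightarrow> real set" where
  "Sigma_ED A N = {\<tau>. \<tau> > 0 \<and> \<not> strong_exp_dichotomy (\<lambda>n. inverse \<tau> *\<^sub>R A n) N}"

end

theory Submission
  imports Defs
begin

(*
  Let tau be outside Sigma, with dichotomy projections P n for (tau^-1 A n). Forward orbits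
  starting in the range of P n grow at most like (tau e^-lambda)^m, while a nonzero component in
  the kernel forces growth at least like (tau e^lambda)^m. Hence S_sigma(n) is the range of P n
  for every sigma in [tau e^-lambda, tau e^lambda), so sigma |-> S_sigma is locally constant off
  Sigma and, by connectedness, constant on [r1, r2] when this interval misses Sigma.

  Conversely, S_r is invariant under the cocycle, so agreement at one time gives agreement at all
  times. Then the range of the projections P2 n at r2 is fixed by the projections P1 n at r1, and
  the contraction of P1 at rate r1 together with the expansion on the kernel of P2 at rate r2
  yields a dichotomy of (tau^-1 A n) with projections P2 n for every tau in [r1, r2].
*)

lemma matrix_inv_right:
  fixes M :: "'a::comm_ring_1^'n^'n"
  assumes "invertible M"
  shows "M ** matrix_inv M = mat 1"
  using assms someI_ex[of "\<lambda>B. M ** B = mat 1 \<and> B ** M = mat 1"]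
  unfolding invertible_def matrix_inv_def by blast

lemma matrix_inv_left:
  fixes M :: "'a::comm_ring_1^'n^'n"
  assumes "invertible M"
  shows "matrix_inv M ** M = mat 1"
  using assms someI_ex[of "\<lambda>B. M ** B = mat 1 \<and> B ** M = mat 1"]
  unfolding invertible_def matrix_inv_def by blast

lemma matrix_inv_eqI:
  fixes M B :: "'a::comm_ring_1^'n^'n"
  assumes "invertible M" "B ** M = mat 1"
  shows "matrix_inv M = B"
proof -
  have "matrix_inv M = (B ** M) ** matrix_inv M" using assms(2) by simp
  also have "\<dots> = B" by (simp add: matrix_mul_assoc[symmetric] matrix_inv_right[OF assms(1)])
  finally show ?thesis .
qed

lemma prod_fwd_add: "prod_fwd A n (i + j) = prod_fwd A (n + i) j ** prod_fwd A n i"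
  by (induction j) (auto simp: matrix_mul_assoc add.assoc)

lemma prod_bwd_prod_fwd:
  assumes "\<And>n. invertible (A n)"
  shows "prod_bwd A n k ** prod_fwd A n k = mat 1"
proof (induction k)
  case (Suc k)
  have "prod_bwd A n (Suc k) ** prod_fwd A n (Suc k)
      = prod_bwd A n k ** (matrix_inv (A (n + k)) ** A (n + k)) ** prod_fwd A n k"
    by (simp add: matrix_mul_assoc)
  with Suc show ?case by (simp add: matrix_inv_left assms)
qed simp

lemma cocycle_forward: "n \<le> m \<Longrightarrow> cocycle A m n = prod_fwd A n (m - n)"
  by (simp add: cocycle_def)

lemma cocycle_backward: "n \<le> m \<Longrightarrow> cocycle A n m = prod_bwd A n (m - n)"
  by (cases "m = n") (auto simp: cocycle_def)

lemma cocycle_same [simp]: "cocycle A n n = mat 1"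
  by (simp add: cocycle_def)

lemma cocycle_inverse:
  assumes "\<And>n. invertible (A n)" "n \<le> m"
  shows "cocycle A n m ** cocycle A m n = mat 1" "cocycle A m n ** cocycle A n m = mat 1"
proof -
  show *: "cocycle A n m ** cocycle A m n = mat 1"
    using assms by (simp add: cocycle_forward cocycle_backward prod_bwd_prod_fwd)
  show "cocycle A m n ** cocycle A n m = mat 1"
    using matrix_left_right_inverse1[OF *] .
qed

lemma cocycle_comp_forward:
  assumes "n \<le> m" "m \<le> k"
  shows "cocycle A k n = cocycle A k m ** cocycle A m n"
proof -
  have "k - n = (m - n) + (k - m)" using assms by simp
  then have "prod_fwd A n (k - n) = prod_fwd A (n + (m - n)) (k - m) ** prod_fwd A n (m - n)"
    by (simp add: prod_fwd_add)
  then show ?thesis using assms by (simp add: cocycle_forward)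
qed

lemma cocycle_comp:
  assumes "\<And>n. invertible (A n)" "m \<le> k" "l \<le> k"
  shows "cocycle A k m = cocycle A k l ** cocycle A l m"
proof (cases "m \<le> l")
  case True
  then show ?thesis using assms cocycle_comp_forward by blast
next
  case False
  then have "cocycle A k l ** cocycle A l m = cocycle A k m ** (cocycle A m l ** cocycle A l m)"
    using assms cocycle_comp_forward[of l m k A] by (simp add: matrix_mul_assoc)
  also have "\<dots> = cocycle A k m" using False by (simp add: cocycle_inverse assms)
  finally show ?thesis by simp
qed

lemma cocycle_scaleR_forward:
  assumes "n \<le> m"
  shows "cocycle (\<lambda>n. c *\<^sub>R A n) m n = (c ^ (m - n)) *\<^sub>R cocycle A m n"
proof -
  have "prod_fwd (\<lambda>n. c *\<^sub>R A n) n k = (c ^ k) *\<^sub>R prod_fwd A n k" for k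
    by (induction k) (auto simp: matrix_scalar_ac scalar_matrix_assoc[symmetric])
  then show ?thesis using assms by (simp add: cocycle_forward)
qed

lemma cocycle_scaleR_backward:
  assumes inv: "\<And>n. invertible (A n)" and "c \<noteq> 0" "n \<le> m"
  shows "cocycle (\<lambda>n. c *\<^sub>R A n) n m = (inverse c ^ (m - n)) *\<^sub>R cocycle A n m"
proof -
  have "prod_bwd (\<lambda>n. c *\<^sub>R A n) n k = (inverse c ^ k) *\<^sub>R prod_bwd A n k" for k
  proof (induction k)
    case (Suc k)
    have "(inverse c *\<^sub>R matrix_inv (A (n + k))) ** (c *\<^sub>R A (n + k)) = mat 1"
      using \<open>c \<noteq> 0\<close> matrix_inv_left[OF inv]
      by (simp add: matrix_scalar_ac scalar_matrix_assoc[symmetric])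
    then have "matrix_inv (c *\<^sub>R A (n + k)) = inverse c *\<^sub>R matrix_inv (A (n + k))"
      using \<open>c \<noteq> 0\<close> by (intro matrix_inv_eqI scalar_invertible inv)
    with Suc show ?case by (simp add: matrix_scalar_ac scalar_matrix_assoc[symmetric] mult.commute)
  qed simp
  then show ?thesis using assms by (simp add: cocycle_backward)
qed

lemma cocycle_commute_invariant:
  assumes "\<And>n. A n ** P n = P (Suc n) ** A n" "n \<le> m"
  shows "cocycle A m n ** P n = P m ** cocycle A m n"
proof -
  have "prod_fwd A n k ** P n = P (n + k) ** prod_fwd A n k" for k
  proof (induction k)
    case (Suc k)
    have "prod_fwd A n (Suc k) ** P n = A (n + k) ** (prod_fwd A n k ** P n)"
      by (simp add: matrix_mul_assoc)
    also have "\<dots> = (A (n + k) ** P (n + k)) ** prod_fwd A n k"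
      using Suc by (simp add: matrix_mul_assoc)
    finally show ?case using assms(1)[of "n + k"] by (simp add: matrix_mul_assoc)
  qed simp
  from this[of "m - n"] show ?thesis using assms(2) by (simp add: cocycle_forward)
qed

lemma is_norm_nonneg: "is_norm M \<Longrightarrow> 0 \<le> M x"
  unfolding is_norm_def by blast

lemma is_norm_eq_zero: "is_norm M \<Longrightarrow> M x = 0 \<longleftrightarrow> x = 0"
  unfolding is_norm_def by blast

lemma is_norm_scaleR: "is_norm M \<Longrightarrow> M (c *\<^sub>R x) = \<bar>c\<bar> * M x"
  unfolding is_norm_def by blast

lemma S_set_iff_eventually_bounded:
  assumes "0 < r"
  shows "v \<in> S_set A N r n \<longleftrightarrow>
    (\<exists>B. \<forall>\<^sub>F m in sequentially. N m (cocycle A m n *v v) \<le> B * r ^ m)"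
    (is "_ \<longleftrightarrow> (\<exists>B. \<forall>\<^sub>F m in sequentially. ?g m \<le> B * r ^ m)")
proof -
  define h where "h m = r powi (- int (m - n)) * ?g m" for m
  have "h m = ?g m / r ^ (m - n)" for m
    by (simp add: h_def power_int_minus divide_inverse mult.commute)
  then have h_le: "h m \<le> C \<longleftrightarrow> ?g m \<le> C * r ^ (m - n)" for m C
    using assms by (simp add: pos_divide_le_eq)
  have pow_split: "r ^ m = r ^ n * r ^ (m - n)" if "n \<le> m" for m
    using that by (simp add: power_add[symmetric])
  have "v \<in> S_set A N r n \<longleftrightarrow> bdd_above (h ` {n..})"
    unfolding S_set_def h_def bdd_above_def by auto
  also have "\<dots> \<longleftrightarrow> (\<exists>B. \<forall>\<^sub>F m in sequentially. ?g m \<le> B * r ^ m)"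
  proof
    assume "bdd_above (h ` {n..})"
    then obtain B where "\<And>m. n \<le> m \<Longrightarrow> h m \<le> B" unfolding bdd_above_def by auto
    then have "?g m \<le> (B / r ^ n) * r ^ m" if "n \<le> m" for m
      using that assms h_le by (simp add: pow_split[OF that])
    then show "\<exists>B. \<forall>\<^sub>F m in sequentially. ?g m \<le> B * r ^ m"
      using eventually_ge_at_top[of n] by (blast intro: eventually_mono)
  next
    assume "\<exists>B. \<forall>\<^sub>F m in sequentially. ?g m \<le> B * r ^ m"
    then obtain B M where B: "\<And>m. M \<le> m \<Longrightarrow> ?g m \<le> B * r ^ m"
      unfolding eventually_sequentially by blast
    have "h m \<le> B * r ^ n" if "max n M \<le> m" for m
      using B[of m] that h_le pow_split[of m] by (simp add: mult.assoc)
    then have "bdd_above (h ` {max n M..})" by (intro bdd_aboveI2) simp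
    moreover have "h ` {n..} \<subseteq> h ` ({n..<max n M} \<union> {max n M..})"
      by (intro image_mono) auto
    ultimately show "bdd_above (h ` {n..})"
      by (metis bdd_above_Un bdd_above_finite bdd_above_mono finite_atLeastLessThan
          finite_imageI image_Un)
  qed
  finally show ?thesis .
qed

lemma S_set_cocycle_iff:
  assumes "\<And>n. invertible (A n)" "0 < r"
  shows "x \<in> S_set A N r m \<longleftrightarrow> cocycle A n m *v x \<in> S_set A N r n"
proof -
  have "\<forall>\<^sub>F k in sequentially. cocycle A k m *v x = cocycle A k n *v (cocycle A n m *v x)"
    using eventually_ge_at_top[of "max m n"]
    by eventually_elim (simp add: cocycle_comp[OF assms(1), of m _ n] matrix_vector_mul_assoc)
  then have "(\<forall>\<^sub>F k in sequentially. N k (cocycle A k m *v x) \<le> B * r ^ k) \<longleftrightarrow>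
      (\<forall>\<^sub>F k in sequentially. N k (cocycle A k n *v (cocycle A n m *v x)) \<le> B * r ^ k)" for B
    by (intro eventually_subst) (auto elim: eventually_mono)
  then show ?thesis by (simp add: S_set_iff_eventually_bounded[OF assms(2)])
qed

lemma S_set_eq_propagate:
  assumes inv: "\<And>n. invertible (A n)" and "0 < r1" "0 < r2"
    and "S_set A N r1 k = S_set A N r2 k"
  shows "S_set A N r1 n = S_set A N r2 n"
proof (rule set_eqI)
  fix x
  have "x \<in> S_set A N r1 n \<longleftrightarrow> cocycle A k n *v x \<in> S_set A N r1 k"
    by (rule S_set_cocycle_iff[OF inv \<open>0 < r1\<close>])
  also have "\<dots> \<longleftrightarrow> x \<in> S_set A N r2 n"
    unfolding assms(4) by (rule S_set_cocycle_iff[OF inv \<open>0 < r2\<close>, symmetric])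
  finally show "x \<in> S_set A N r1 n \<longleftrightarrow> x \<in> S_set A N r2 n" .
qed

lemma fixed_points_subset_S_set:
  assumes norms: "\<And>n. is_norm (N n)" and "0 \<le> K" "0 < \<alpha>" "\<alpha> \<le> \<sigma>"
    and stable: "\<And>m n x. n \<le> m \<Longrightarrow>
      N m (cocycle A m n *v (P n *v x)) \<le> K * \<alpha> ^ (m - n) * N n x"
    and "P n *v v = v"
  shows "v \<in> S_set A N \<sigma> n"
proof -
  have "0 < \<sigma>" using assms(3,4) by linarith
  have "N m (cocycle A m n *v v) \<le> (K * N n v / \<sigma> ^ n) * \<sigma> ^ m" if "n \<le> m" for m
  proof -
    have "N m (cocycle A m n *v v) \<le> K * \<alpha> ^ (m - n) * N n v"
      using stable[OF that, of v] \<open>P n *v v = v\<close> by simp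
    also have "\<dots> \<le> K * \<sigma> ^ (m - n) * N n v"
      using assms(2-4) is_norm_nonneg[OF norms]
      by (intro mult_right_mono mult_left_mono power_mono) auto
    also have "\<sigma> ^ m = \<sigma> ^ n * \<sigma> ^ (m - n)"
      using that by (simp add: power_add[symmetric])
    then have "K * \<sigma> ^ (m - n) * N n v = (K * N n v / \<sigma> ^ n) * \<sigma> ^ m"
      using \<open>0 < \<sigma>\<close> by simp
    finally show ?thesis .
  qed
  then have "\<forall>\<^sub>F m in sequentially. N m (cocycle A m n *v v) \<le> (K * N n v / \<sigma> ^ n) * \<sigma> ^ m"
    unfolding eventually_sequentially by blast
  then show ?thesis using S_set_iff_eventually_bounded[OF \<open>0 < \<sigma>\<close>] by blast
qed

lemma S_set_subset_fixed_points:
  assumes inv: "\<And>n. invertible (A n)" and norms: "\<And>n. is_norm (N n)"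
    and "0 \<le> K" "0 < \<sigma>" "\<sigma> < \<beta>"
    and invar: "\<And>n. A n ** P n = P (Suc n) ** A n"
    and unstable: "\<And>m n x. n \<le> m \<Longrightarrow>
      N n (cocycle A n m *v ((mat 1 - P m) *v x)) \<le> K / \<beta> ^ (m - n) * N m x"
    and "v \<in> S_set A N \<sigma> n"
  shows "P n *v v = v"
proof -
  have "0 < \<beta>" using assms(4,5) by linarith
  obtain B where B: "\<forall>\<^sub>F m in sequentially. N m (cocycle A m n *v v) \<le> B * \<sigma> ^ m"
    using assms(8) S_set_iff_eventually_bounded[OF \<open>0 < \<sigma>\<close>] by blast
  define w where "w = (mat 1 - P n) *v v"
  have w_bound: "N n w \<le> K * B * \<beta> ^ n * (\<sigma> / \<beta>) ^ m"
    if "n \<le> m" "N m (cocycle A m n *v v) \<le> B * \<sigma> ^ m" for m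
  proof -
    have "cocycle A m n *v (P n *v v) = P m *v (cocycle A m n *v v)"
      by (simp add: matrix_vector_mul_assoc cocycle_commute_invariant[of A P, OF invar that(1)])
    then have "cocycle A m n *v w = (mat 1 - P m) *v (cocycle A m n *v v)"
      unfolding w_def matrix_vector_mult_diff_rdistrib matrix_vector_mult_diff_distrib by simp
    moreover have "w = cocycle A n m *v (cocycle A m n *v w)"
      by (simp add: matrix_vector_mul_assoc cocycle_inverse(1)[OF inv that(1)])
    ultimately have "N n w \<le> K / \<beta> ^ (m - n) * N m (cocycle A m n *v v)"
      using unstable[OF that(1)] by simp
    also have "\<dots> \<le> K / \<beta> ^ (m - n) * (B * \<sigma> ^ m)"
      using that(2) \<open>0 \<le> K\<close> \<open>0 < \<beta>\<close> by (intro mult_left_mono) auto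
    also have "\<beta> ^ m = \<beta> ^ n * \<beta> ^ (m - n)"
      using that(1) by (simp add: power_add[symmetric])
    then have "K / \<beta> ^ (m - n) * (B * \<sigma> ^ m) = K * B * \<beta> ^ n * (\<sigma> / \<beta>) ^ m"
      using \<open>0 < \<beta>\<close> by (simp add: power_divide)
    finally show ?thesis .
  qed
  have "\<forall>\<^sub>F m in sequentially. N n w \<le> K * B * \<beta> ^ n * (\<sigma> / \<beta>) ^ m"
    using eventually_ge_at_top[of n] B by eventually_elim (rule w_bound)
  moreover have "(\<lambda>m. K * B * \<beta> ^ n * (\<sigma> / \<beta>) ^ m) \<longlonglongrightarrow> K * B * \<beta> ^ n * 0"
    using \<open>0 < \<sigma>\<close> \<open>\<sigma> < \<beta>\<close> by (intro tendsto_intros) auto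
  ultimately have "N n w \<le> K * B * \<beta> ^ n * 0"
    by (intro tendsto_lowerbound[OF _ _ trivial_limit_sequentially])
  then have "w = 0"
    using is_norm_nonneg[OF norms, of n w] is_norm_eq_zero[OF norms] by simp
  then show ?thesis by (simp add: w_def matrix_vector_mult_diff_rdistrib)
qed

lemma S_set_eq_fixed_points:
  assumes inv: "\<And>n. invertible (A n)" and norms: "\<And>n. is_norm (N n)"
    and "0 \<le> K" "0 < \<alpha>" "\<alpha> \<le> \<sigma>" "\<sigma> < \<beta>"
    and invar: "\<And>n. A n ** P n = P (Suc n) ** A n"
    and stable: "\<And>m n x. n \<le> m \<Longrightarrow>
      N m (cocycle A m n *v (P n *v x)) \<le> K * \<alpha> ^ (m - n) * N n x"
    and unstable: "\<And>m n x. n \<le> m \<Longrightarrow>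
      N n (cocycle A n m *v ((mat 1 - P m) *v x)) \<le> K / \<beta> ^ (m - n) * N m x"
  shows "S_set A N \<sigma> n = {v. P n *v v = v}"
proof -
  have "0 < \<sigma>" using assms(4,5) by linarith
  show ?thesis
    using fixed_points_subset_S_set[OF norms assms(3-5) stable]
      S_set_subset_fixed_points[OF inv norms assms(3) \<open>0 < \<sigma>\<close> assms(6) invar unstable]
    by blast
qed

definition scaled_dichotomy :: "(nat \<Rightarrow> real^'d^'d) \<Rightarrow> (nat \<Rightarrow> real^'d \<Rightarrow> real) \<Rightarrow> real
    \<Rightarrow> real \<Rightarrow> real \<Rightarrow> real \<Rightarrow> (nat \<Rightarrow> real^'d^'d) \<Rightarrow> bool" where
  "scaled_dichotomy A N \<tau> K a lam P \<longleftrightarrow> K > 0 \<and> lam > 0 \<and> a \<ge> lam \<and>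
    (\<forall>n. P n ** P n = P n) \<and> (\<forall>n. A n ** P n = P (Suc n) ** A n) \<and>
    (\<forall>m n x. n \<le> m \<longrightarrow>
       N m (cocycle A m n *v (P n *v x))
         \<le> K * exp (- lam * real (m - n)) * N n x * \<tau> ^ (m - n) \<and>
       N n (cocycle A n m *v ((mat 1 - P m) *v x))
         \<le> K * exp (- lam * real (m - n)) * N m x / \<tau> ^ (m - n) \<and>
       N m (cocycle A m n *v x) \<le> K * exp (a * real (m - n)) * N n x * \<tau> ^ (m - n) \<and>
       N n (cocycle A n m *v x) \<le> K * exp (a * real (m - n)) * N m x / \<tau> ^ (m - n))"

lemma strong_exp_dichotomy_scaled_iff:
  fixes A :: "nat \<Rightarrow> real^'d^'d"
  assumes inv: "\<And>n. invertible (A n)" and norms: "\<And>n. is_norm (N n)" and "0 < \<tau>"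
  shows "strong_exp_dichotomy (\<lambda>n. inverse \<tau> *\<^sub>R A n) N \<longleftrightarrow>
    (\<exists>K a lam P. scaled_dichotomy A N \<tau> K a lam P)"
proof -
  let ?C = "\<lambda>n. inverse \<tau> *\<^sub>R A n"
  have invariant_iff: "?C n ** P n = P (Suc n) ** ?C n \<longleftrightarrow> A n ** P n = P (Suc n) ** A n"
    for P :: "nat \<Rightarrow> real^'d^'d" and n
    using \<open>0 < \<tau>\<close> by (simp add: matrix_scalar_ac scalar_matrix_assoc[symmetric])
  have forward_iff: "N m (cocycle ?C m n *v y) \<le> R \<longleftrightarrow> N m (cocycle A m n *v y) \<le> R * \<tau> ^ (m - n)"
    if "n \<le> m" for m n y R
  proof -
    have "N m (cocycle ?C m n *v y) = N m (cocycle A m n *v y) / \<tau> ^ (m - n)"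
      using that \<open>0 < \<tau>\<close>
      by (simp add: cocycle_scaleR_forward scaleR_matrix_vector_assoc[symmetric]
          is_norm_scaleR[OF norms] power_inverse divide_inverse mult.commute)
    then show ?thesis using \<open>0 < \<tau>\<close> by (simp add: divide_le_eq)
  qed
  have backward_iff: "N n (cocycle ?C n m *v y) \<le> R \<longleftrightarrow> N n (cocycle A n m *v y) \<le> R / \<tau> ^ (m - n)"
    if "n \<le> m" for m n y R
  proof -
    have "N n (cocycle ?C n m *v y) = N n (cocycle A n m *v y) * \<tau> ^ (m - n)"
      using that \<open>0 < \<tau>\<close>
      by (simp add: cocycle_scaleR_backward[OF inv] scaleR_matrix_vector_assoc[symmetric]
          is_norm_scaleR[OF norms] mult.commute)
    then show ?thesis using \<open>0 < \<tau>\<close> by (simp add: le_divide_eq)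
  qed
  show ?thesis
    unfolding strong_exp_dichotomy_def scaled_dichotomy_def
    by (simp add: invariant_iff forward_iff backward_iff cong: imp_cong conj_cong)
qed

lemma scaled_dichotomy_S_set:
  assumes inv: "\<And>n. invertible (A n)" and norms: "\<And>n. is_norm (N n)" and "0 < \<tau>"
    and dich: "scaled_dichotomy A N \<tau> K a lam P"
    and "\<tau> * exp (- lam) \<le> \<sigma>" "\<sigma> < \<tau> * exp lam"
  shows "S_set A N \<sigma> n = {v. P n *v v = v}"
proof (rule S_set_eq_fixed_points[OF inv norms])
  have exp_pow: "exp (- lam * real k) = exp (- lam) ^ k" for k
    by (metis exp_of_nat_mult mult.commute)
  show "0 \<le> K" "\<And>n. A n ** P n = P (Suc n) ** A n"
    using dich by (auto simp: scaled_dichotomy_def)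
  show "0 < \<tau> * exp (- lam)" using \<open>0 < \<tau>\<close> by simp
  fix m n :: nat and x assume "n \<le> m"
  let ?e = "exp (- lam * real (m - n))"
  have "N m (cocycle A m n *v (P n *v x)) \<le> K * ?e * N n x * \<tau> ^ (m - n)"
    "N n (cocycle A n m *v ((mat 1 - P m) *v x)) \<le> K * ?e * N m x / \<tau> ^ (m - n)"
    using dich \<open>n \<le> m\<close> unfolding scaled_dichotomy_def by blast+
  moreover have "K * ?e * N n x * \<tau> ^ (m - n) = K * (\<tau> * exp (- lam)) ^ (m - n) * N n x"
    "K * ?e * N m x / \<tau> ^ (m - n) = K / (\<tau> * exp lam) ^ (m - n) * N m x"
    unfolding exp_pow by (simp_all add: power_mult_distrib exp_minus power_inverse divide_inverse)
  ultimately show "N m (cocycle A m n *v (P n *v x)) \<le> K * (\<tau> * exp (- lam)) ^ (m - n) * N n x"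
    "N n (cocycle A n m *v ((mat 1 - P m) *v x)) \<le> K / (\<tau> * exp lam) ^ (m - n) * N m x"
    by linarith+
qed (use assms in auto)

lemma S_set_locally_constant:
  assumes inv: "\<And>n. invertible (A n)" and norms: "\<And>n. is_norm (N n)"
    and "0 < \<tau>" "\<tau> \<notin> Sigma_ED A N"
  shows "\<forall>\<^sub>F t in nhds \<tau>. S_set A N t = S_set A N \<tau>"
proof -
  obtain K a lam P where dich: "scaled_dichotomy A N \<tau> K a lam P"
    using assms strong_exp_dichotomy_scaled_iff[OF inv norms] unfolding Sigma_ED_def by auto
  then have "0 < lam" by (simp add: scaled_dichotomy_def)
  let ?I = "{\<tau> * exp (- lam) <..< \<tau> * exp lam}"
  have S_eq: "S_set A N t n = {v. P n *v v = v}" if "t \<in> ?I" for t n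
    using that scaled_dichotomy_S_set[OF inv norms \<open>0 < \<tau>\<close> dich] by simp
  have "\<tau> \<in> ?I" using \<open>0 < \<tau>\<close> \<open>0 < lam\<close> by simp
  then have "\<forall>\<^sub>F t in nhds \<tau>. t \<in> ?I" by (intro eventually_nhds_in_open) auto
  then show ?thesis by eventually_elim (simp add: S_eq[OF \<open>\<tau> \<in> ?I\<close>] S_eq fun_eq_iff)
qed

lemma S_set_eq_if_Sigma_ED_gap:
  assumes inv: "\<And>n. invertible (A n)" and norms: "\<And>n. is_norm (N n)"
    and "0 < r1" "r1 \<le> r2" and gap: "{r1..r2} \<inter> Sigma_ED A N = {}"
  shows "S_set A N r1 = S_set A N r2"
proof (rule connected_local_const[where A = "{r1..r2}"])
  show "\<forall>t\<in>{r1..r2}. \<forall>\<^sub>F s in at t within {r1..r2}. S_set A N t = S_set A N s"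
  proof
    fix t assume t: "t \<in> {r1..r2}"
    then have "\<forall>\<^sub>F s in nhds t. S_set A N s = S_set A N t"
      using gap \<open>0 < r1\<close> by (intro S_set_locally_constant[OF inv norms]) auto
    then show "\<forall>\<^sub>F s in at t within {r1..r2}. S_set A N t = S_set A N s"
      unfolding eventually_at_filter by (auto elim: eventually_mono)
  qed
qed (use \<open>r1 \<le> r2\<close> in auto)

lemma mult_mono_bound:
  fixes k k' e e' y p p' :: real
  assumes "0 \<le> k" "k \<le> k'" "0 \<le> e" "e \<le> e'" "0 \<le> y" "0 \<le> p" "p \<le> p'"
  shows "k * e * y * p \<le> k' * e' * y * p'"
  using assms by (intro mult_mono) (auto intro: mult_nonneg_nonneg order_trans)

lemma scaled_dichotomy_stable_on_fixed_range:
  assumes dich: "scaled_dichotomy A N r K a lam P"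
    and P_fixes_Q: "\<And>n x. P n *v (Q n *v x) = Q n *v x"
    and Q_bound: "\<And>n x. N n (Q n *v x) \<le> C * N n x"
    and "0 < r" "n \<le> m"
  shows "N m (cocycle A m n *v (Q n *v x))
    \<le> (K * C) * exp (- lam * real (m - n)) * N n x * r ^ (m - n)"
proof -
  have "0 < K" using dich by (simp add: scaled_dichotomy_def)
  have "N m (cocycle A m n *v (Q n *v x)) = N m (cocycle A m n *v (P n *v (Q n *v x)))"
    by (simp add: P_fixes_Q)
  also have "\<dots> \<le> K * exp (- lam * real (m - n)) * N n (Q n *v x) * r ^ (m - n)"
    using dich \<open>n \<le> m\<close> unfolding scaled_dichotomy_def by blast
  also have "\<dots> \<le> K * exp (- lam * real (m - n)) * (C * N n x) * r ^ (m - n)"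
    using Q_bound \<open>0 < K\<close> \<open>0 < r\<close> by (intro mult_right_mono mult_left_mono) auto
  finally show ?thesis by (simp add: mult_ac)
qed

lemma scaled_dichotomy_between:
  assumes norms: "\<And>n. is_norm (N n)"
    and d1: "scaled_dichotomy A N r1 K1 a1 l1 P1" and d2: "scaled_dichotomy A N r2 K2 a2 l2 P2"
    and P1_fixes_P2: "\<And>n x. P1 n *v (P2 n *v x) = P2 n *v x"
    and "0 < r1" "r1 \<le> \<tau>" "\<tau> \<le> r2"
  shows "scaled_dichotomy A N \<tau> (K1 * K2 + K1 + K2) (max a1 a2) (min l1 l2) P2"
proof -
  define K where "K = K1 * K2 + K1 + K2"
  define a where "a = max a1 a2"
  define l where "l = min l1 l2"
  from d1 have "0 < K1" "0 < l1" "l1 \<le> a1"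
    and forward1: "\<And>m n x. n \<le> m \<Longrightarrow>
      N m (cocycle A m n *v x) \<le> K1 * exp (a1 * real (m - n)) * N n x * r1 ^ (m - n)"
    unfolding scaled_dichotomy_def by auto
  from d2 have "0 < K2" "0 < l2" "l2 \<le> a2"
    and stable2: "\<And>m n x. n \<le> m \<Longrightarrow> N m (cocycle A m n *v (P2 n *v x))
      \<le> K2 * exp (- l2 * real (m - n)) * N n x * r2 ^ (m - n)"
    and unstable2: "\<And>m n x. n \<le> m \<Longrightarrow> N n (cocycle A n m *v ((mat 1 - P2 m) *v x))
      \<le> K2 * exp (- l2 * real (m - n)) * N m x * (1 / r2 ^ (m - n))"
    and backward2: "\<And>m n x. n \<le> m \<Longrightarrow>
      N n (cocycle A n m *v x) \<le> K2 * exp (a2 * real (m - n)) * N m x * (1 / r2 ^ (m - n))"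
    unfolding scaled_dichotomy_def by auto
  have "N n (P2 n *v x) \<le> K2 * N n x" for n x
    using stable2[of n n x] by simp
  note stable12 = scaled_dichotomy_stable_on_fixed_range[OF d1 P1_fixes_P2 this \<open>0 < r1\<close>]
  have N_nonneg: "0 \<le> N n x" for n x using is_norm_nonneg[OF norms] .
  have "0 < K1 * K2" using \<open>0 < K1\<close> \<open>0 < K2\<close> by simp
  then have "0 < K" "K1 \<le> K" "K2 \<le> K" "K1 * K2 \<le> K"
    using \<open>0 < K1\<close> \<open>0 < K2\<close> unfolding K_def by linarith+
  have "0 < l" "l \<le> a"
    using \<open>0 < l1\<close> \<open>0 < l2\<close> \<open>l1 \<le> a1\<close> \<open>l2 \<le> a2\<close> unfolding a_def l_def by auto
  have "scaled_dichotomy A N \<tau> K a l P2"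
    unfolding scaled_dichotomy_def
  proof (intro conjI allI impI)
    fix m n :: nat and x assume "n \<le> m"
    have exp_le: "exp (- l1 * real (m - n)) \<le> exp (- l * real (m - n))"
      "exp (- l2 * real (m - n)) \<le> exp (- l * real (m - n))"
      "exp (a1 * real (m - n)) \<le> exp (a * real (m - n))"
      "exp (a2 * real (m - n)) \<le> exp (a * real (m - n))"
      unfolding l_def a_def by (auto intro!: mult_right_mono)
    have pow_le: "r1 ^ (m - n) \<le> \<tau> ^ (m - n)" "1 / r2 ^ (m - n) \<le> 1 / \<tau> ^ (m - n)"
      using assms(5-7) by (auto intro!: power_mono divide_left_mono mult_pos_pos)
    have "0 \<le> r1 ^ (m - n)" "0 \<le> 1 / r2 ^ (m - n)" using assms(5-7) by simp_all
    note mono = mult_mono_bound[OF _ _ _ _ N_nonneg]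
    show "N m (cocycle A m n *v (P2 n *v x)) \<le> K * exp (- l * real (m - n)) * N n x * \<tau> ^ (m - n)"
      using \<open>0 < K1 * K2\<close> \<open>K1 * K2 \<le> K\<close> exp_le(1) pow_le(1) \<open>0 \<le> r1 ^ (m - n)\<close>
      by (intro order_trans[OF stable12[OF \<open>n \<le> m\<close>] mono]) simp_all
    show "N m (cocycle A m n *v x) \<le> K * exp (a * real (m - n)) * N n x * \<tau> ^ (m - n)"
      using \<open>0 < K1\<close> \<open>K1 \<le> K\<close> exp_le(3) pow_le(1) \<open>0 \<le> r1 ^ (m - n)\<close>
      by (intro order_trans[OF forward1[OF \<open>n \<le> m\<close>] mono]) simp_all
    have "N n (cocycle A n m *v ((mat 1 - P2 m) *v x))
        \<le> K * exp (- l * real (m - n)) * N m x * (1 / \<tau> ^ (m - n))"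
      using \<open>0 < K2\<close> \<open>K2 \<le> K\<close> exp_le(2) pow_le(2) \<open>0 \<le> 1 / r2 ^ (m - n)\<close>
      by (intro order_trans[OF unstable2[OF \<open>n \<le> m\<close>] mono]) simp_all
    then show "N n (cocycle A n m *v ((mat 1 - P2 m) *v x))
        \<le> K * exp (- l * real (m - n)) * N m x / \<tau> ^ (m - n)"
      by simp
    have "N n (cocycle A n m *v x) \<le> K * exp (a * real (m - n)) * N m x * (1 / \<tau> ^ (m - n))"
      using \<open>0 < K2\<close> \<open>K2 \<le> K\<close> exp_le(4) pow_le(2) \<open>0 \<le> 1 / r2 ^ (m - n)\<close>
      by (intro order_trans[OF backward2[OF \<open>n \<le> m\<close>] mono]) simp_all
    then show "N n (cocycle A n m *v x) \<le> K * exp (a * real (m - n)) * N m x / \<tau> ^ (m - n)"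
      by simp
  qed (use \<open>0 < K\<close> \<open>0 < l\<close> \<open>l \<le> a\<close> d2 in \<open>auto simp: scaled_dichotomy_def\<close>)
  then show ?thesis unfolding K_def a_def l_def .
qed

lemma Sigma_ED_gap_if_S_set_eq:
  fixes A :: "nat \<Rightarrow> real^'d^'d"
  assumes inv: "\<And>n. invertible (A n)" and norms: "\<And>n. is_norm (N n)"
    and "0 < r1" "r1 \<le> r2" "r1 \<notin> Sigma_ED A N" "r2 \<notin> Sigma_ED A N"
    and S_eq: "S_set A N r1 n0 = S_set A N r2 n0"
  shows "{r1..r2} \<inter> Sigma_ED A N = {}"
proof -
  have "0 < r2" using assms(3,4) by simp
  obtain K1 a1 l1 P1 where d1: "scaled_dichotomy A N r1 K1 a1 l1 P1"
    using assms(3,5) strong_exp_dichotomy_scaled_iff[OF inv norms] unfolding Sigma_ED_def by auto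
  obtain K2 a2 l2 P2 where d2: "scaled_dichotomy A N r2 K2 a2 l2 P2"
    using \<open>0 < r2\<close> assms(6) strong_exp_dichotomy_scaled_iff[OF inv norms]
    unfolding Sigma_ED_def by auto
  have S1: "S_set A N r1 n = {v. P1 n *v v = v}" for n
    by (rule scaled_dichotomy_S_set[OF inv norms \<open>0 < r1\<close> d1])
      (use d1 \<open>0 < r1\<close> in \<open>auto simp: scaled_dichotomy_def\<close>)
  have S2: "S_set A N r2 n = {v. P2 n *v v = v}" for n
    by (rule scaled_dichotomy_S_set[OF inv norms \<open>0 < r2\<close> d2])
      (use d2 \<open>0 < r2\<close> in \<open>auto simp: scaled_dichotomy_def\<close>)
  have P1_fixes_P2: "P1 n *v (P2 n *v x) = P2 n *v x" for n x
  proof -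
    have "P2 n *v (P2 n *v x) = P2 n *v x"
      using d2 by (simp add: scaled_dichotomy_def matrix_vector_mul_assoc)
    then have "P2 n *v x \<in> S_set A N r1 n"
      using S2 S_set_eq_propagate[OF inv \<open>0 < r1\<close> \<open>0 < r2\<close> S_eq] by simp
    then show ?thesis using S1 by simp
  qed
  show ?thesis
  proof (rule ccontr)
    assume "{r1..r2} \<inter> Sigma_ED A N \<noteq> {}"
    then obtain \<tau> where \<tau>: "r1 \<le> \<tau>" "\<tau> \<le> r2" "\<tau> \<in> Sigma_ED A N" by auto
    have "scaled_dichotomy A N \<tau> (K1 * K2 + K1 + K2) (max a1 a2) (min l1 l2) P2"
      using scaled_dichotomy_between[OF norms d1 d2 P1_fixes_P2 \<open>0 < r1\<close> \<tau>(1,2)] .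
    then show False
      using \<tau> \<open>0 < r1\<close> strong_exp_dichotomy_scaled_iff[OF inv norms, of \<tau>]
      unfolding Sigma_ED_def by auto
  qed
qed

theorem lemma7p5:
  fixes A :: "nat \<Rightarrow> real^'d^'d" and N :: "nat \<Rightarrow> real^'d \<Rightarrow> real"
    and r1 r2 :: real
  assumes inv: "\<And>n. invertible (A n)"
    and norms: "\<And>n. is_norm (N n)"
    and growth: "\<exists>K a. K > 0 \<and> a > 0 \<and> (\<forall>m n x. n \<le> m \<longrightarrow>
         N m (cocycle A m n *v x) \<le> K * exp (a * real (m - n)) * N n x \<and>
         N n (cocycle A n m *v x) \<le> K * exp (a * real (m - n)) * N m x)"
    and r1pos: "0 < r1" and r12: "r1 < r2"
    and r1ns: "r1 \<notin> Sigma_ED A N" and r2ns: "r2 \<notin> Sigma_ED A N"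
  shows "((\<exists>n. S_set A N r1 n = S_set A N r2 n) \<longleftrightarrow> {r1..r2} \<inter> Sigma_ED A N = {})
       \<and> ((\<forall>n. S_set A N r1 n = S_set A N r2 n) \<longleftrightarrow> {r1..r2} \<inter> Sigma_ED A N = {})"
proof -
  have "{r1..r2} \<inter> Sigma_ED A N = {} \<Longrightarrow> S_set A N r1 = S_set A N r2"
    using S_set_eq_if_Sigma_ED_gap[OF inv norms r1pos] r12 by simp
  moreover have "S_set A N r1 n = S_set A N r2 n \<Longrightarrow> {r1..r2} \<inter> Sigma_ED A N = {}" for n
    using Sigma_ED_gap_if_S_set_eq[OF inv norms r1pos _ r1ns r2ns] r12 by simp
  ultimately show ?thesis by auto
qed

end
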